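(* Let $n,r$ be integers with $n\ge r+2\ge 4$, and let $h(U_{n,r})$ be the number of pairwise different (i.e. pairwise non-equivalent) hyperplane splits of $P(U_{n,r})$. Then $h(U_{n,r})\ge \lfloor n/2\rfloor-1$.
   Context: $U_{n,r}$ is the uniform matroid on $\{1,\dots,n\}$ whose bases are all $r$-subsets. For a matroid $N$ on $\{1,\dots,n\}$, $P(N)=\mathrm{conv}\{\sum_{i\in B}e_i : B \text{ a base of } N\}\subset\mathbb{R}^n$. A hyperplane split of $P(N)$ is an expression $P(N)=P(N_1)\cup P(N_2)$ with $N_1,N_2$ matroids on the same ground set such that $P(N_1)\cap P(N_2)$ is a face of both $P(N_1)$ and $P(N_2)$, and $P(N_1),P(N_2)\neq P(N)$. Two hyperplane splits $P(N_1)\cup P(N_2)$ and $P(N_1')\cup P(N_2')$ are equivalent if $P(N_i)$ and $P(N_i')$ are combinatorially equivalent (have isomorphic face lattices) for each $i=1,2$, and different otherwise. *)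

theory Defs
  imports "HOL-Analysis.Analysis"
begin

text \<open>Matroids on the finite ground set UNIV :: 'n set (with CARD('n) = n),
  given by their set of bases (basis axioms).\<close>
definition matroid_bases :: "'n::finite set set \<Rightarrow> bool" where
  "matroid_bases \<B> \<longleftrightarrow> \<B> \<noteq> {} \<and>
     (\<forall>B1\<in>\<B>. \<forall>B2\<in>\<B>. \<forall>x\<in>B1 - B2. \<exists>y\<in>B2 - B1. insert y (B1 - {x}) \<in> \<B>)"

definition uniform_matroid :: "nat \<Rightarrow> 'n::finite set set" where
  "uniform_matroid r = {B. card B = r}"

definition incidence_vec :: "'n::finite set \<Rightarrow> real ^ 'n" where
  "incidence_vec B = (\<chi> i. if i \<in> B then 1 else 0)"

definition base_polytope :: "'n::finite set set \<Rightarrow> (real ^ 'n) set" where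
  "base_polytope \<B> = convex hull (incidence_vec ` \<B>)"

definition comb_equiv :: "(real ^ 'n::finite) set \<Rightarrow> (real ^ 'n) set \<Rightarrow> bool" where
  "comb_equiv P Q \<longleftrightarrow> (\<exists>f. bij_betw f {F. F face_of P} {G. G face_of Q} \<and>
     (\<forall>F1 F2. F1 face_of P \<longrightarrow> F2 face_of P \<longrightarrow> (F1 \<subseteq> F2 \<longleftrightarrow> f F1 \<subseteq> f F2)))"

definition hyperplane_split :: "'n::finite set set \<Rightarrow> 'n set set \<Rightarrow> 'n set set \<Rightarrow> bool" where
  "hyperplane_split N N1 N2 \<longleftrightarrow> matroid_bases N1 \<and> matroid_bases N2 \<and>
     base_polytope N = base_polytope N1 \<union> base_polytope N2 \<and>
     (base_polytope N1 \<inter> base_polytope N2) face_of base_polytope N1 \<and>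
     (base_polytope N1 \<inter> base_polytope N2) face_of base_polytope N2 \<and>
     base_polytope N1 \<noteq> base_polytope N \<and> base_polytope N2 \<noteq> base_polytope N"

definition split_equiv :: "('n::finite set set \<times> 'n set set) rel" where
  "split_equiv = {((N1, N2), (N1', N2')).
     comb_equiv (base_polytope N1) (base_polytope N1') \<and>
     comb_equiv (base_polytope N2) (base_polytope N2')}"

definition num_splits :: "'n::finite set set \<Rightarrow> nat" where
  "num_splits N = card ({(N1, N2). hyperplane_split N N1 N2} // split_equiv)"

end

theory Submission
  imports Defs
begin

(* Every split used is cut out by a hyperplane x(A) = k, where x(A) is the sum of the
   coordinates in A.  The geometric core is that such a hyperplane cuts P(U_{n,r}) into the
   base polytopes of the bases meeting A in at most k, resp. at least k, elements.  This is
   proved by decomposing the bases into "levels" |B \<inter> A| = j: a basis exchange between an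
   upper and a lower level (level_exchange) lets one peel off extreme levels (level_hull_split),
   and induction (level_hull_cut) reduces to two adjacent levels, where the cut is a face.

   To tell splits apart, the number of atoms of the face lattice (vertex_faces) is invariant
   under combinatorial equivalence and equals the number of bases for base polytopes.  Two
   families of splits along a chain of sets A 2 \<subseteq> A 3 \<subseteq> ... have strictly increasing
   numbers of bases in one half; they give n - r - 1 and r - 1 splits, and the larger of the
   two is at least n div 2 - 1. *)

lemma convex_combination_4:
  fixes C :: "'a::real_vector set"
  assumes "convex C" "p1 \<in> C" "p2 \<in> C" "p3 \<in> C" "p4 \<in> C"
    "c1 \<ge> 0" "c2 \<ge> 0" "c3 \<ge> 0" "c4 \<ge> 0" "c1 + c2 + c3 + c4 = 1"
  shows "c1 *\<^sub>R p1 + c2 *\<^sub>R p2 + c3 *\<^sub>R p3 + c4 *\<^sub>R p4 \<in> C"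
proof -
  define c where "c i = [c1, c2, c3, c4] ! i" for i
  define p where "p i = [p1, p2, p3, p4] ! i" for i
  have "(\<Sum>i<4. c i *\<^sub>R p i) \<in> C"
    by (rule convex_sum[OF _ assms(1)])
       (use assms in \<open>auto simp: c_def p_def numeral_eq_Suc lessThan_Suc less_Suc_eq\<close>)
  then show ?thesis by (simp add: c_def p_def numeral_eq_Suc add.assoc)
qed

(* A proper convex combination of two numbers in [0,1] can only be an endpoint
  of [0,1] if both numbers are equal; this makes 0/1-vectors extreme. *)
lemma convex_combination_endpoint:
  fixes a b u :: real
  assumes "0 < u" "u < 1" "0 \<le> a" "a \<le> 1" "0 \<le> b" "b \<le> 1"
    and "(1 - u) * a + u * b \<in> {0, 1}"
  shows "a = b"
  using assms(7)
proof
  assume "(1 - u) * a + u * b = 0"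
  then show "a = b" using assms(1-6) by (smt (verit) mult_less_0_iff zero_less_mult_iff)
next
  assume "(1 - u) * a + u * b \<in> {1}"
  then show "a = b" using assms(1-6) by (smt (verit) mult_less_cancel_left1 mult_less_cancel_left2 singletonD)
qed

lemma convex_hull_Un_split:
  fixes X Y Z :: "'a::euclidean_space set"
  assumes R: "convex R1" "convex R2" and sub: "X \<subseteq> R1" "Y \<subseteq> R2" "Z \<subseteq> R1 \<inter> R2"
    and exch: "\<And>y z. y \<in> convex hull X \<Longrightarrow> z \<in> convex hull Y \<Longrightarrow>
                 \<exists>u v. u \<in> R1 \<inter> R2 \<and> v \<in> R1 \<inter> R2 \<and> y + z = u + v"
  shows "convex hull (X \<union> Y \<union> Z) \<subseteq> R1 \<union> R2"
proof (cases "X = {} \<or> Y = {}")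
  case True
  then have "convex hull (X \<union> Y \<union> Z) \<subseteq> R2 \<or> convex hull (X \<union> Y \<union> Z) \<subseteq> R1"
    using sub by (metis R Un_empty_left Un_empty_right Un_least hull_minimal le_infE)
  then show ?thesis by blast
next
  case False
  let ?M = "R1 \<inter> R2"
  have cX: "convex hull X \<subseteq> R1" and cY: "convex hull Y \<subseteq> R2"
    using sub R by (simp_all add: hull_minimal)
  from False obtain y0 z0 where "y0 \<in> convex hull X" "z0 \<in> convex hull Y"
    by (meson ex_in_conv hull_subset subsetD)
  then have M: "convex ?M" "?M \<noteq> {}" using exch R by (auto intro: convex_Int)
  show ?thesis
  proof
    fix x assume "x \<in> convex hull (X \<union> Y \<union> Z)"
    also have "\<dots> \<subseteq> convex hull (convex hull X \<union> convex hull (convex hull Y \<union> ?M))"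
      using sub by (intro hull_mono) (auto intro: hull_subset[THEN subsetD])
    finally obtain a b y w where ab: "a \<ge> 0" "b \<ge> 0" "a + b = 1" and y: "y \<in> convex hull X"
       and "w \<in> convex hull (convex hull Y \<union> ?M)" and x: "x = a *\<^sub>R y + b *\<^sub>R w"
      using False by (subst (asm) convex_hull_union_two) auto
    then obtain c d z m where cd: "c \<ge> 0" "d \<ge> 0" "c + d = 1" and z: "z \<in> convex hull Y"
       and m: "m \<in> ?M" and w: "w = c *\<^sub>R z + d *\<^sub>R m"
      using False M by (subst (asm) convex_hull_union_two) auto
    obtain u v where uv: "u \<in> ?M" "v \<in> ?M" "y + z = u + v" using exch[OF y z] by blast
    have bcd: "b * c + b * d = b" using cd(3) by (metis distrib_left mult.right_neutral)
    show "x \<in> R1 \<union> R2"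
    proof (cases "a \<le> b * c")
      case True
      have "a *\<^sub>R u + a *\<^sub>R v = a *\<^sub>R y + a *\<^sub>R z"
        using uv(3) by (metis scaleR_right_distrib)
      then have "x = a *\<^sub>R u + a *\<^sub>R v + (b * c - a) *\<^sub>R z + (b * d) *\<^sub>R m"
        unfolding x w by (simp add: algebra_simps)
      also have "\<dots> \<in> R2"
        using True ab cd uv m z cY by (intro convex_combination_4[OF R(2)]) (auto simp: bcd add.assoc)
      finally show ?thesis by blast
    next
      case False
      have "(b * c) *\<^sub>R u + (b * c) *\<^sub>R v = (b * c) *\<^sub>R y + (b * c) *\<^sub>R z"
        using uv(3) by (metis scaleR_right_distrib)
      then have "x = (b * c) *\<^sub>R u + (b * c) *\<^sub>R v + (a - b * c) *\<^sub>R y + (b * d) *\<^sub>R m"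
        unfolding x w by (simp add: algebra_simps)
      also have "\<dots> \<in> R1"
        using False ab cd uv m y cX by (intro convex_combination_4[OF R(1)]) (use bcd in auto)
      finally show ?thesis by blast
    qed
  qed
qed

lemma convex_hull_slice:
  fixes S :: "'a::euclidean_space set"
  assumes "finite S" and above: "\<And>s. s \<in> S \<Longrightarrow> b \<le> c \<bullet> s"
    and x: "x \<in> convex hull S" "c \<bullet> x \<le> b"
  shows "x \<in> convex hull {s \<in> S. c \<bullet> s = b}"
proof -
  have "convex hull S \<subseteq> {y. b \<le> c \<bullet> y}"
    using above by (intro hull_minimal) (auto simp: convex_halfspace_ge)
  then have face: "(convex hull S \<inter> {y. c \<bullet> y = b}) face_of convex hull S"
    by (intro face_of_Int_supporting_hyperplane_ge) (auto simp: convex_convex_hull)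
  obtain S' where S': "S' \<subseteq> S" "convex hull S \<inter> {y. c \<bullet> y = b} = convex hull S'"
    using face_of_convex_hull_subset[OF finite_imp_compact[OF \<open>finite S\<close>] face] by blast
  have "S' \<subseteq> {s \<in> S. c \<bullet> s = b}"
    using S' hull_subset[of S' convex] by blast
  moreover have "x \<in> convex hull S'"
    using S'(2) x \<open>convex hull S \<subseteq> {y. b \<le> c \<bullet> y}\<close> by fastforce
  ultimately show ?thesis by (meson hull_mono subsetD)
qed

lemma incidence_vec_inner:
  "incidence_vec A \<bullet> incidence_vec (B::'n::finite set) = real (card (A \<inter> B))"
proof -
  have "incidence_vec A \<bullet> incidence_vec B = (\<Sum>i\<in>UNIV. if i \<in> A \<inter> B then 1 else 0)"
    unfolding incidence_vec_def inner_vec_def by (rule sum.cong) auto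
  also have "\<dots> = real (card (A \<inter> B))"
    by (simp add: sum.If_cases Int_def)
  finally show ?thesis .
qed

lemma inj_incidence_vec: "inj (incidence_vec :: 'n::finite set \<Rightarrow> real ^ 'n)"
  by (rule injI) (auto simp: incidence_vec_def vec_eq_iff split: if_splits)

lemma incidence_vec_extreme_point:
  fixes T :: "(real ^ 'n::finite) set"
  assumes "incidence_vec B \<in> T" and cube: "\<And>x i. x \<in> T \<Longrightarrow> 0 \<le> x$i \<and> x$i \<le> 1"
  shows "incidence_vec B extreme_point_of T"
  unfolding extreme_point_of_def
proof (intro conjI ballI assms(1))
  fix a b assume a: "a \<in> T" and b: "b \<in> T"
  show "incidence_vec B \<notin> open_segment a b"
  proof
    assume "incidence_vec B \<in> open_segment a b"
    then obtain u where "a \<noteq> b" "0 < u" "u < 1"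
      and eq: "incidence_vec B = (1 - u) *\<^sub>R a + u *\<^sub>R b" by (auto simp: in_segment)
    have "a$i = b$i" for i
    proof -
      have "(incidence_vec B)$i = (1 - u) * a$i + u * b$i" using eq by simp
      moreover have "0 \<le> a$i" "a$i \<le> 1" "0 \<le> b$i" "b$i \<le> 1" using cube a b by auto
      ultimately show ?thesis
        using \<open>0 < u\<close> \<open>u < 1\<close> convex_combination_endpoint[of u "a$i" "b$i"]
        by (auto simp: incidence_vec_def split: if_splits)
    qed
    then show False using \<open>a \<noteq> b\<close> by (simp add: vec_eq_iff)
  qed
qed

definition level_bases :: "nat \<Rightarrow> 'n::finite set \<Rightarrow> nat \<Rightarrow> nat \<Rightarrow> 'n set set" where
  "level_bases r A q p = {B. card B = r \<and> q \<le> card (B \<inter> A) \<and> card (B \<inter> A) \<le> p}"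

abbreviation level_hull :: "nat \<Rightarrow> 'n::finite set \<Rightarrow> nat \<Rightarrow> nat \<Rightarrow> (real ^ 'n) set" where
  "level_hull r A q p \<equiv> convex hull (incidence_vec ` level_bases r A q p)"

lemma level_hull_mono: "q' \<le> q \<Longrightarrow> p \<le> p' \<Longrightarrow> level_hull r A q p \<subseteq> level_hull r A q' p'"
  by (intro hull_mono image_mono) (auto simp: level_bases_def)

lemma level_hull_ge: "level_hull r A q p \<subseteq> {x. real q \<le> incidence_vec A \<bullet> x}"
  by (rule hull_minimal)
     (auto simp: level_bases_def incidence_vec_inner Int_commute convex_halfspace_ge)

lemma level_hull_le: "level_hull r A q p \<subseteq> {x. incidence_vec A \<bullet> x \<le> real p}"
  by (rule hull_minimal)
     (auto simp: level_bases_def incidence_vec_inner Int_commute convex_halfspace_le)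

(* Basis exchange between a base meeting A in p elements and one meeting it in q < p:
  swapping an element of A for one outside A moves both levels one step towards each other
  while keeping the sum of the incidence vectors. *)
lemma level_exchange:
  fixes A :: "'n::finite set"
  assumes B: "B \<in> level_bases r A p p" and B': "B' \<in> level_bases r A q q" and "q < p"
  obtains C C' where "C \<in> level_bases r A (p - 1) (p - 1)" "C' \<in> level_bases r A (q + 1) (q + 1)"
    "incidence_vec B + incidence_vec B' = incidence_vec C + incidence_vec C'"
proof -
  have card: "card B = r" "card B' = r" "card (B \<inter> A) = p" "card (B' \<inter> A) = q"
    using B B' by (auto simp: level_bases_def)
  have "\<not> B \<inter> A \<subseteq> B' \<inter> A"
    using card \<open>q < p\<close> card_mono[of "B' \<inter> A" "B \<inter> A"] by auto
  then obtain a where a: "a \<in> B" "a \<in> A" "a \<notin> B'" by auto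
  have "card (B - A) = r - p" "card (B' - A) = r - q" "p \<le> r"
    using card card_Diff_subset_Int[of B A] card_Diff_subset_Int[of B' A]
      card_mono[of B "B \<inter> A"] by auto
  then have "\<not> B' - A \<subseteq> B - A"
    using \<open>q < p\<close> card_mono[of "B - A" "B' - A"] by auto
  then obtain b where b: "b \<in> B'" "b \<notin> A" "b \<notin> B" by auto
  define C where "C = insert b (B - {a})"
  define C' where "C' = insert a (B' - {b})"
  have "C \<inter> A = B \<inter> A - {a}" "C' \<inter> A = insert a (B' \<inter> A)"
    unfolding C_def C'_def using a b by auto
  moreover have "card C = r" "card C' = r"
    unfolding C_def C'_def using a b card card_gt_0_iff[of B] by (auto simp: card.insert_remove)
  ultimately have "C \<in> level_bases r A (p - 1) (p - 1)" "C' \<in> level_bases r A (q + 1) (q + 1)"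
    using a card by (auto simp: level_bases_def)
  moreover have "incidence_vec B + incidence_vec B' = incidence_vec C + incidence_vec C'"
    unfolding incidence_vec_def C_def C'_def vec_eq_iff using a b by auto
  ultimately show ?thesis using that by blast
qed

lemma level_hull_exchange:
  fixes A :: "'n::finite set"
  assumes "q < p"
  shows "level_hull r A p p + level_hull r A q q
     \<subseteq> level_hull r A (p - 1) (p - 1) + level_hull r A (q + 1) (q + 1)"
proof -
  have "incidence_vec ` level_bases r A p p + incidence_vec ` level_bases r A q q
     \<subseteq> incidence_vec ` level_bases r A (p - 1) (p - 1) + incidence_vec ` level_bases r A (q + 1) (q + 1)"
  proof
    fix x assume "x \<in> incidence_vec ` level_bases r A p p + incidence_vec ` level_bases r A q q"
    then obtain B B' where "B \<in> level_bases r A p p" "B' \<in> level_bases r A q q"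
      and x: "x = incidence_vec B + incidence_vec B'" by (auto simp: set_plus_def)
    with assms obtain C C' where "C \<in> level_bases r A (p - 1) (p - 1)"
      "C' \<in> level_bases r A (q + 1) (q + 1)" "x = incidence_vec C + incidence_vec C'"
      by (metis level_exchange)
    then show "x \<in> incidence_vec ` level_bases r A (p - 1) (p - 1)
                  + incidence_vec ` level_bases r A (q + 1) (q + 1)"
      by blast
  qed
  then show ?thesis by (metis convex_hull_set_plus hull_mono)
qed

lemma level_hull_split:
  fixes A :: "'n::finite set"
  assumes "q + 2 \<le> p"
  shows "level_hull r A q p \<subseteq> level_hull r A (q + 1) p \<union> level_hull r A q (p - 1)"
proof -
  have layers: "level_bases r A q p
      = level_bases r A p p \<union> level_bases r A q q \<union> level_bases r A (q + 1) (p - 1)"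
    using assms by (auto simp: level_bases_def)
  have mid: "level_hull r A (p - 1) (p - 1) \<union> level_hull r A (q + 1) (q + 1)
      \<subseteq> level_hull r A (q + 1) p \<inter> level_hull r A q (p - 1)"
    using assms level_hull_mono[of "q + 1" _ _ p r A] level_hull_mono[of q _ _ "p - 1" r A] by auto
  show ?thesis
    unfolding layers image_Un
  proof (rule convex_hull_Un_split)
    fix y z
    assume "y \<in> level_hull r A p p" "z \<in> level_hull r A q q"
    then have "y + z \<in> level_hull r A (p - 1) (p - 1) + level_hull r A (q + 1) (q + 1)"
      using level_hull_exchange[of q p r A] assms by (auto intro: set_plus_intro)
    then show "\<exists>u v. u \<in> level_hull r A (q + 1) p \<inter> level_hull r A q (p - 1) \<and>
                     v \<in> level_hull r A (q + 1) p \<inter> level_hull r A q (p - 1) \<and> y + z = u + v"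
      using mid by (force simp: set_plus_def)
  qed (use assms in \<open>auto simp: level_bases_def intro!: hull_inc\<close>)
qed

(* By induction on p - q, peeling off levels with level_hull_split; when
  only the levels m and m+1 remain, convex_hull_slice applies. *)
lemma level_hull_cut:
  fixes A :: "'n::finite set"
  assumes "x \<in> level_hull r A q p" and "incidence_vec A \<bullet> x \<le> real m"
  shows "x \<in> level_hull r A 0 m"
  using assms
proof (induction "p - q" arbitrary: q p rule: less_induct)
  case less
  consider "p \<le> m" | "q + 2 \<le> p" | "q = m" "p = m + 1"
    using less.prems level_hull_ge[of r A q p] by force
  then show ?case
  proof cases
    case 1
    then show ?thesis using less.prems level_hull_mono[of 0 q p m r A] by auto
  next
    case 2
    then have "x \<in> level_hull r A (q + 1) p \<union> level_hull r A q (p - 1)"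
      using level_hull_split less.prems(1) by blast
    then show ?thesis
      using less.hyps[of p "q + 1"] less.hyps[of "p - 1" q] 2 less.prems(2) by fastforce
  next
    case 3
    have "{v \<in> incidence_vec ` level_bases r A m (m + 1). incidence_vec A \<bullet> v = real m}
        \<subseteq> incidence_vec ` level_bases r A 0 m"
      by (auto simp: level_bases_def incidence_vec_inner Int_commute)
    moreover have "x \<in> convex hull {v \<in> incidence_vec ` level_bases r A m (m + 1). incidence_vec A \<bullet> v = real m}"
      using 3 less.prems
      by (intro convex_hull_slice) (auto simp: level_bases_def incidence_vec_inner Int_commute)
    ultimately show ?thesis by (meson hull_mono subsetD)
  qed
qed

lemma uniform_eq_level: "uniform_matroid r = level_bases r (A::'n::finite set) 0 r"
  unfolding uniform_matroid_def level_bases_def by (auto intro: card_mono)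

lemma level_bases_compl:
  fixes A :: "'n::finite set"
  assumes "k \<le> r"
  shows "level_bases r A k r = level_bases r (- A) 0 (r - k)"
proof -
  have "card (B \<inter> - A) = r - card (B \<inter> A)" "card (B \<inter> A) \<le> r" if "card B = r" for B :: "'n set"
    using that card_Diff_subset_Int[of B A] card_mono[of B "B \<inter> A"] by (auto simp: Diff_eq)
  then show ?thesis using assms unfolding level_bases_def by fastforce
qed

lemma uniform_coordinate_sum:
  assumes "x \<in> base_polytope (uniform_matroid r :: 'n::finite set set)"
  shows "incidence_vec (UNIV::'n set) \<bullet> x = real r"
proof -
  have "base_polytope (uniform_matroid r :: 'n set set) \<subseteq> {y. incidence_vec UNIV \<bullet> y = real r}"
    unfolding base_polytope_def
    by (rule hull_minimal) (auto simp: uniform_matroid_def incidence_vec_inner convex_hyperplane)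
  then show ?thesis using assms by auto
qed

lemma uniform_cut_le:
  fixes A :: "'n::finite set"
  assumes "x \<in> base_polytope (uniform_matroid r :: 'n set set)" "incidence_vec A \<bullet> x \<le> real k"
  shows "x \<in> base_polytope (level_bases r A 0 k)"
  using assms level_hull_cut unfolding base_polytope_def uniform_eq_level[of r A] by blast

lemma uniform_cut_ge:
  fixes A :: "'n::finite set"
  assumes x: "x \<in> base_polytope (uniform_matroid r :: 'n set set)"
    and ge: "real k \<le> incidence_vec A \<bullet> x" and "k \<le> r"
  shows "x \<in> base_polytope (level_bases r A k r)"
proof -
  have "incidence_vec (- A) = incidence_vec UNIV - incidence_vec A"
    by (auto simp: incidence_vec_def vec_eq_iff)
  then have "incidence_vec (- A) \<bullet> x = real r - incidence_vec A \<bullet> x"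
    using uniform_coordinate_sum[OF x] by (simp add: inner_diff_left)
  then have "incidence_vec (- A) \<bullet> x \<le> real (r - k)" using ge \<open>k \<le> r\<close> by simp
  then show ?thesis
    using uniform_cut_le[OF x] level_bases_compl[OF \<open>k \<le> r\<close>, of A] by simp
qed

(* The only delicate case is x \<notin> A, B1 tight and B2 - B1 \<subseteq> A, which would force
  |B2 \<inter> A| > |B1 \<inter> A| = k. *)
lemma level_bases_matroid:
  fixes A :: "'n::finite set"
  assumes "level_bases r A 0 k \<noteq> {}"
  shows "matroid_bases (level_bases r A 0 k)"
  unfolding matroid_bases_def
proof (intro conjI ballI assms)
  fix B1 B2 x
  assume B1: "B1 \<in> level_bases r A 0 k" and B2: "B2 \<in> level_bases r A 0 k" and x: "x \<in> B1 - B2"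
  have card: "card B1 = r" "card B2 = r" "card (B1 \<inter> A) \<le> k" "card (B2 \<inter> A) \<le> k"
    using B1 B2 by (auto simp: level_bases_def)
  define B' where "B' y = insert y (B1 - {x})" for y
  have diff: "card (B2 - B1) = card (B1 - B2)" "card (B1 - B2) \<ge> 1"
    using card card_Diff_subset_Int[of B2 B1] card_Diff_subset_Int[of B1 B2] x
      card_gt_0_iff[of "B1 - B2"] by (auto simp: Int_commute)
  have card_B': "card (B' y) = r" if "y \<in> B2 - B1" for y
    using that x card card_gt_0_iff[of B1] by (auto simp: B'_def card.insert_remove)
  have le_succ: "card (B' y \<inter> A) \<le> card (B1 \<inter> A) + 1" for y
  proof -
    have "card (B' y \<inter> A) \<le> card (insert y (B1 \<inter> A))"
      by (rule card_mono) (auto simp: B'_def)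
    then show ?thesis by (simp add: card_insert_if split: if_splits)
  qed
  have le_same: "card (B' y \<inter> A) \<le> card (B1 \<inter> A)" if "y \<notin> A \<or> x \<in> A" for y
  proof (cases "x \<in> A")
    case True
    have "card (B' y \<inter> A) \<le> card (insert y (B1 \<inter> A - {x}))"
      by (rule card_mono) (auto simp: B'_def)
    also have "\<dots> \<le> card (B1 \<inter> A)"
      using True x card_Diff1_less[of "B1 \<inter> A" x] by (simp add: card_insert_if)
    finally show ?thesis .
  next
    case False
    then show ?thesis using that by (intro card_mono) (auto simp: B'_def)
  qed
  obtain y0 where y0: "y0 \<in> B2 - B1"
    using diff by (metis all_not_in_conv card.empty not_one_le_zero)
  show "\<exists>y\<in>B2 - B1. insert y (B1 - {x}) \<in> level_bases r A 0 k"
  proof (cases "(\<exists>y\<in>B2 - B1. y \<notin> A \<or> x \<in> A) \<or> card (B1 \<inter> A) < k")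
    case True
    then obtain y where "y \<in> B2 - B1" "card (B' y \<inter> A) \<le> k"
      using y0 le_same le_succ card(3) by (metis Suc_eq_plus1 Suc_leI order_trans)
    then show ?thesis using card_B' by (auto simp: B'_def level_bases_def)
  next
    case False
    then have tight: "B2 - B1 \<subseteq> A" "x \<notin> A" "card (B1 \<inter> A) = k" using y0 card(3) by auto
    have "card (B1 \<inter> A) \<le> card ((B1 \<inter> B2 \<inter> A) \<union> (B1 - B2 - {x}))"
      using \<open>x \<notin> A\<close> by (intro card_mono) auto
    also have "\<dots> \<le> card (B1 \<inter> B2 \<inter> A) + (card (B1 - B2) - 1)"
      using x card_Un_le[of "B1 \<inter> B2 \<inter> A" "B1 - B2 - {x}"] card_Diff_singleton[of x "B1 - B2"]
      by simp
    also have "\<dots> < card (B1 \<inter> B2 \<inter> A) + card (B2 - B1)"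
      using diff by simp
    also have "\<dots> = card ((B1 \<inter> B2 \<inter> A) \<union> (B2 - B1))"
      by (rule card_Un_disjoint[symmetric]) auto
    also have "\<dots> \<le> card (B2 \<inter> A)"
      using \<open>B2 - B1 \<subseteq> A\<close> by (intro card_mono) auto
    finally show ?thesis using card tight by simp
  qed
qed

lemma uniform_level_split:
  fixes A :: "'n::finite set"
  assumes hi: "card Bh = r" "k < card (Bh \<inter> A)" and lo: "card Bl = r" "card (Bl \<inter> A) < k"
  shows "hyperplane_split (uniform_matroid r :: 'n set set) (level_bases r A 0 k) (level_bases r A k r)"
proof -
  let ?P = "base_polytope (uniform_matroid r :: 'n set set)"
  let ?P1 = "base_polytope (level_bases r A 0 k)"
  let ?P2 = "base_polytope (level_bases r A k r)"
  let ?c = "incidence_vec A"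
  have "k \<le> r" using hi card_mono[of Bh "Bh \<inter> A"] by auto
  have "Bl \<in> level_bases r A 0 k" "Bh \<in> level_bases r A k r"
    using hi lo card_mono[of Bh "Bh \<inter> A"] by (auto simp: level_bases_def)
  then have matroids: "matroid_bases (level_bases r A 0 k)" "matroid_bases (level_bases r A k r)"
    using level_bases_matroid level_bases_compl[OF \<open>k \<le> r\<close>, of A] by (metis empty_iff)+
  have le1: "?P1 \<subseteq> {x. ?c \<bullet> x \<le> real k}" and ge2: "?P2 \<subseteq> {x. real k \<le> ?c \<bullet> x}"
    unfolding base_polytope_def using level_hull_le level_hull_ge by blast+
  have sub: "?P1 \<subseteq> ?P" "?P2 \<subseteq> ?P"
    unfolding base_polytope_def uniform_eq_level[of r A]
    using \<open>k \<le> r\<close> level_hull_mono[of 0 0 k r r A] level_hull_mono[of 0 k r r r A] by auto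
  have union: "?P = ?P1 \<union> ?P2"
  proof
    show "?P \<subseteq> ?P1 \<union> ?P2"
    proof
      fix x assume x: "x \<in> ?P"
      show "x \<in> ?P1 \<union> ?P2"
        using uniform_cut_le[OF x, of A k] uniform_cut_ge[OF x _ \<open>k \<le> r\<close>, of A]
        by (cases "?c \<bullet> x \<le> real k") auto
    qed
  qed (use sub in auto)
  have "?P1 \<inter> ?P2 = ?P1 \<inter> {x. ?c \<bullet> x = real k}"
    using le1 ge2 sub uniform_cut_ge[of _ r k A] \<open>k \<le> r\<close> by fastforce
  then have face1: "(?P1 \<inter> ?P2) face_of ?P1"
    using le1 face_of_Int_supporting_hyperplane_le[of ?P1 ?c "real k"]
    by (auto simp: base_polytope_def)
  have "?P1 \<inter> ?P2 = ?P2 \<inter> {x. ?c \<bullet> x = real k}"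
    using le1 ge2 sub uniform_cut_le[of _ r A k] by fastforce
  then have face2: "(?P1 \<inter> ?P2) face_of ?P2"
    using ge2 face_of_Int_supporting_hyperplane_ge[where S = ?P2 and a = ?c and b = "real k"]
    by (auto simp: base_polytope_def)
  have "incidence_vec Bh \<in> ?P" "incidence_vec Bl \<in> ?P"
    unfolding base_polytope_def uniform_matroid_def using hi lo by (auto intro: hull_inc)
  moreover have "incidence_vec Bh \<notin> ?P1" "incidence_vec Bl \<notin> ?P2"
    using le1 ge2 hi lo by (auto simp: incidence_vec_inner Int_commute)
  ultimately have "?P1 \<noteq> ?P" "?P2 \<noteq> ?P" by auto
  then show ?thesis
    unfolding hyperplane_split_def using matroids union face1 face2 by blast
qed

(* Faces F of P whose face interval [{}, F] has exactly two elements (the atoms of the face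
  lattice).  Their number is a combinatorial invariant, and for polytopes they are the vertices. *)
definition vertex_faces :: "(real ^ 'n::finite) set \<Rightarrow> (real ^ 'n) set set" where
  "vertex_faces P = {F. F face_of P \<and> card {G. G face_of P \<and> G \<subseteq> F} = 2}"

(* An isomorphism of face lattices maps each interval below F bijectively onto the interval
  below its image, hence preserves atoms. *)
lemma comb_equiv_card_vertex_faces:
  assumes "comb_equiv P Q"
  shows "card (vertex_faces P) = card (vertex_faces Q)"
proof -
  obtain f where bij: "bij_betw f {F. F face_of P} {G. G face_of Q}"
    and ord: "\<And>F1 F2. F1 face_of P \<Longrightarrow> F2 face_of P \<Longrightarrow> F1 \<subseteq> F2 \<longleftrightarrow> f F1 \<subseteq> f F2"
    using assms unfolding comb_equiv_def by blast
  have below: "bij_betw f {G. G face_of P \<and> G \<subseteq> F} {H. H face_of Q \<and> H \<subseteq> f F}"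
    if F: "F face_of P" for F
  proof (rule bij_betw_subset[OF bij])
    show "f ` {G. G face_of P \<and> G \<subseteq> F} = {H. H face_of Q \<and> H \<subseteq> f F}"
    proof
      show "f ` {G. G face_of P \<and> G \<subseteq> F} \<subseteq> {H. H face_of Q \<and> H \<subseteq> f F}"
      proof clarify
        fix G assume "G face_of P" "G \<subseteq> F"
        then show "f G face_of Q \<and> f G \<subseteq> f F"
          using bij_betw_apply[OF bij] ord[OF _ F] by blast
      qed
      show "{H. H face_of Q \<and> H \<subseteq> f F} \<subseteq> f ` {G. G face_of P \<and> G \<subseteq> F}"
      proof clarify
        fix H assume "H face_of Q" "H \<subseteq> f F"
        then have "H \<in> f ` {G. G face_of P}" using bij_betw_imp_surj_on[OF bij] by blast
        then obtain G where "G face_of P" "H = f G" by blast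
        with \<open>H \<subseteq> f F\<close> show "H \<in> f ` {G. G face_of P \<and> G \<subseteq> F}"
          using ord[OF _ F] by blast
      qed
    qed
  qed auto
  have preserved: "F \<in> vertex_faces P \<longleftrightarrow> f F \<in> vertex_faces Q" if "F face_of P" for F
    using that bij_betw_apply[OF bij] bij_betw_same_card[OF below[OF that]]
    by (simp add: vertex_faces_def)
  have "f ` vertex_faces P = vertex_faces Q"
  proof
    show "f ` vertex_faces P \<subseteq> vertex_faces Q"
      using preserved by (auto simp: vertex_faces_def)
    show "vertex_faces Q \<subseteq> f ` vertex_faces P"
    proof
      fix H assume H: "H \<in> vertex_faces Q"
      then have "H \<in> f ` {F. F face_of P}"
        using bij_betw_imp_surj_on[OF bij] by (auto simp: vertex_faces_def)
      then obtain F where "F face_of P" "H = f F" by blast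
      then show "H \<in> f ` vertex_faces P" using H preserved by blast
    qed
  qed
  moreover have "inj_on f (vertex_faces P)"
    using bij_betw_imp_inj_on[OF bij] by (rule inj_on_subset) (auto simp: vertex_faces_def)
  ultimately show ?thesis by (metis card_image)
qed

lemma vertex_faces_polytope:
  fixes P :: "(real ^ 'n::finite) set"
  assumes "compact P" "convex P"
  shows "vertex_faces P = (\<lambda>v. {v}) ` {v. v extreme_point_of P}"
proof
  show "vertex_faces P \<subseteq> (\<lambda>v. {v}) ` {v. v extreme_point_of P}"
  proof
    fix F assume "F \<in> vertex_faces P"
    then have F: "F face_of P" and two: "card {G. G face_of P \<and> G \<subseteq> F} = 2"
      by (auto simp: vertex_faces_def)
    have "F \<noteq> {}"
    proof
      assume "F = {}"
      then have "{G. G face_of P \<and> G \<subseteq> F} = {{}}" by auto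
      then show False using two by simp
    qed
    moreover have "compact F" "convex F"
      using F assms face_of_imp_compact face_of_imp_convex by auto
    ultimately obtain v where v: "v extreme_point_of F"
      using extreme_point_exists_convex by blast
    then have vP: "{v} face_of P" and "v \<in> F"
      using F face_of_singleton face_of_trans extreme_point_of_def by blast+
    have "F = {v}"
    proof (rule ccontr)
      assume "F \<noteq> {v}"
      have sub: "{{}, {v}, F} \<subseteq> {G. G face_of P \<and> G \<subseteq> F}"
        using F vP \<open>v \<in> F\<close> by auto
      have three: "card {{}, {v}, F} = 3"
        using \<open>F \<noteq> {v}\<close> \<open>F \<noteq> {}\<close> by auto
      have "finite {G. G face_of P \<and> G \<subseteq> F}"
        using two by (metis card.infinite zero_neq_numeral)
      from card_mono[OF this sub] show False using two three by simp
    qed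
    then show "F \<in> (\<lambda>v. {v}) ` {v. v extreme_point_of P}"
      using vP by (auto simp: face_of_singleton)
  qed
  show "(\<lambda>v. {v}) ` {v. v extreme_point_of P} \<subseteq> vertex_faces P"
  proof clarify
    fix v assume "v extreme_point_of P"
    then have "{G. G face_of P \<and> G \<subseteq> {v}} = {{}, {v}}"
      by (auto simp: face_of_singleton subset_singleton_iff)
    then show "{v} \<in> vertex_faces P"
      using \<open>v extreme_point_of P\<close> by (simp add: vertex_faces_def face_of_singleton)
  qed
qed

lemma card_vertex_faces_base_polytope:
  "card (vertex_faces (base_polytope (S :: 'n::finite set set))) = card S"
proof -
  let ?T = "convex hull (incidence_vec ` S)"
  have cube: "?T \<subseteq> {x. \<forall>i. 0 \<le> x$i \<and> x$i \<le> 1}"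
  proof (rule hull_minimal)
    show "convex {x::real^'n. \<forall>i. 0 \<le> x$i \<and> x$i \<le> 1}"
      unfolding convex_def by (auto intro!: convex_bound_le)
  qed (auto simp: incidence_vec_def)
  have "{v. v extreme_point_of ?T} = incidence_vec ` S"
  proof
    show "{v. v extreme_point_of ?T} \<subseteq> incidence_vec ` S"
      using extreme_point_of_convex_hull by blast
    show "incidence_vec ` S \<subseteq> {v. v extreme_point_of ?T}"
    proof clarify
      fix B assume "B \<in> S"
      then have "incidence_vec B \<in> ?T" by (simp add: hull_inc)
      then show "incidence_vec B extreme_point_of ?T"
        using cube by (intro incidence_vec_extreme_point) auto
    qed
  qed
  then have "vertex_faces (base_polytope S) = (\<lambda>B. {incidence_vec B}) ` S"
    unfolding base_polytope_def
    by (simp add: vertex_faces_polytope compact_convex_hull finite_imp_compact image_image)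
  moreover have "inj_on (\<lambda>B. {incidence_vec B}) S"
    using inj_incidence_vec by (auto simp: inj_on_def)
  ultimately show ?thesis by (simp add: card_image)
qed

lemma comb_equiv_refl: "comb_equiv P P"
  unfolding comb_equiv_def by (rule exI[of _ id]) auto

(* Splits whose halves have pairwise different numbers of bases lie in pairwise different
  equivalence classes, since the number of vertices is a combinatorial invariant. *)
lemma num_splits_lower_bound:
  fixes N :: "'n::finite set set"
  assumes "finite I" and split: "\<And>i. i \<in> I \<Longrightarrow> hyperplane_split N (N1 i) (N2 i)"
    and distinct: "\<And>i j. i \<in> I \<Longrightarrow> j \<in> I \<Longrightarrow> card (N1 i) = card (N1 j) \<Longrightarrow>
                      card (N2 i) = card (N2 j) \<Longrightarrow> i = j"
  shows "card I \<le> num_splits N"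
proof -
  let ?splits = "{(M1, M2). hyperplane_split N M1 M2}"
  let ?class = "\<lambda>i. split_equiv `` {(N1 i, N2 i)}"
  have "inj_on ?class I"
  proof (rule inj_onI)
    fix i j assume "i \<in> I" "j \<in> I" "?class i = ?class j"
    then have "(N1 j, N2 j) \<in> ?class i"
      by (simp add: split_equiv_def comb_equiv_refl)
    then have "comb_equiv (base_polytope (N1 i)) (base_polytope (N1 j))"
      "comb_equiv (base_polytope (N2 i)) (base_polytope (N2 j))"
      by (auto simp: split_equiv_def)
    then show "i = j"
      using distinct[OF \<open>i \<in> I\<close> \<open>j \<in> I\<close>] comb_equiv_card_vertex_faces
        card_vertex_faces_base_polytope by metis
  qed
  then have "card I = card (?class ` I)" by (simp add: card_image)
  also have "\<dots> \<le> card (?splits // split_equiv)"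
    using split by (intro card_mono) (auto intro: quotientI)
  finally show ?thesis unfolding num_splits_def .
qed

lemma nested_chain:
  obtains A :: "nat \<Rightarrow> 'n::finite set"
  where "\<And>a. a \<le> CARD('n) \<Longrightarrow> card (A a) = a" "\<And>a b. a \<le> b \<Longrightarrow> A a \<subseteq> A b"
proof -
  obtain h :: "nat \<Rightarrow> 'n" where h: "bij_betw h {0..<CARD('n)} UNIV"
    using ex_bij_betw_nat_finite[of "UNIV :: 'n set"] by auto
  show ?thesis
  proof (rule that[of "\<lambda>a. h ` {0..<a}"])
    fix a assume "a \<le> CARD('n)"
    then have "{0..<a} \<subseteq> {0..<CARD('n)}" by auto
    then have "inj_on h {0..<a}"
      using bij_betw_imp_inj_on[OF h] inj_on_subset by blast
    then show "card (h ` {0..<a}) = a" by (simp add: card_image)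
  qed auto
qed

lemma card_complement: "card (- X) = CARD('n) - card (X :: 'n::finite set)"
  by (simp add: Compl_eq_Diff_UNIV card_Diff_subset)

(* First family: for 2 \<le> a \<le> n - r the hyperplanes x(A a) = 1 split P(U_{n,r}), and the
  upper halves have strictly increasing numbers of bases.  This gives n - r - 1 splits. *)
lemma split_family_sparse:
  fixes A :: "nat \<Rightarrow> 'n::finite set"
  assumes chain: "\<And>a. a \<le> CARD('n) \<Longrightarrow> card (A a) = a"
    and mono: "\<And>a b. a \<le> b \<Longrightarrow> A a \<subseteq> A b" and "2 \<le> r" "r + 2 \<le> CARD('n)"
  shows "CARD('n) - r - 1 \<le> num_splits (uniform_matroid r :: 'n set set)"
proof -
  define I where "I = {2..CARD('n) - r}"
  have split: "hyperplane_split (uniform_matroid r :: 'n set set)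
      (level_bases r (A a) 0 1) (level_bases r (A a) 1 r)" if "a \<in> I" for a
  proof -
    have a: "2 \<le> a" "a + r \<le> CARD('n)" using that by (auto simp: I_def)
    obtain Bh :: "'n set" where Bh: "A 2 \<subseteq> Bh" "card Bh = r"
      using exists_subset_between[of "A 2" r UNIV] chain assms by auto
    have "2 \<le> card (Bh \<inter> A a)"
      using card_mono[of "Bh \<inter> A a" "A 2"] Bh mono[OF a(1)] chain[of 2] assms by auto
    moreover have "r \<le> card (- A a)" using chain[of a] a by (simp add: card_complement)
    then obtain Bl :: "'n set" where Bl: "Bl \<subseteq> - A a" "card Bl = r"
      using exists_subset_between[of "{}" r "- A a"] by auto
    moreover have "Bl \<inter> A a = {}" using Bl by auto
    ultimately show ?thesis using uniform_level_split[of Bh r 1 "A a" Bl] Bh by auto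
  qed
  have "strict_mono_on I (\<lambda>a. card (level_bases r (A a) 1 r))"
  proof (rule strict_mono_onI)
    fix a b assume "a \<in> I" "b \<in> I" "a < b"
    then have ab: "a < b" "b + r \<le> CARD('n)" by (auto simp: I_def)
    show "card (level_bases r (A a) 1 r) < card (level_bases r (A b) 1 r)"
    proof (rule psubset_card_mono)
      have sub: "level_bases r (A a) 1 r \<subseteq> level_bases r (A b) 1 r"
      proof
        fix B assume "B \<in> level_bases r (A a) 1 r"
        moreover have "card (B \<inter> A a) \<le> card (B \<inter> A b)"
          using mono[of a b] ab by (intro card_mono) auto
        moreover have "card (B \<inter> A b) \<le> card B" by (intro card_mono) auto
        ultimately show "B \<in> level_bases r (A b) 1 r" by (auto simp: level_bases_def)
      qed
      have "card (A b - A a) = b - a"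
        using chain[of a] chain[of b] mono[of a b] ab by (simp add: card_Diff_subset)
      then obtain x where x: "x \<in> A b - A a"
        using ab by (metis all_not_in_conv card.empty zero_less_diff less_irrefl)
      have "r \<le> card (- A a)" using chain[of a] ab by (simp add: card_complement)
      then obtain B :: "'n set" where B: "{x} \<subseteq> B" "B \<subseteq> - A a" "card B = r"
        using exists_subset_between[of "{x}" r "- A a"] x assms by auto
      have "B \<inter> A a = {}" using B by auto
      then have "B \<notin> level_bases r (A a) 1 r" by (simp add: level_bases_def)
      moreover have "B \<in> level_bases r (A b) 1 r"
      proof -
        have "x \<in> B \<inter> A b" using B x by auto
        then have "1 \<le> card (B \<inter> A b)" by (metis card_0_eq empty_iff finite less_one not_le)
        moreover have "card (B \<inter> A b) \<le> r" using B(3) by (metis card_mono finite inf_le1)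
        ultimately show ?thesis using B(3) by (simp add: level_bases_def)
      qed
      ultimately show "level_bases r (A a) 1 r \<subset> level_bases r (A b) 1 r" using sub by blast
    qed simp
  qed
  then have "inj_on (\<lambda>a. card (level_bases r (A a) 1 r)) I"
    by (rule strict_mono_on_imp_inj_on)
  then have "card I \<le> num_splits (uniform_matroid r :: 'n set set)"
    using split by (intro num_splits_lower_bound) (auto simp: I_def inj_on_def)
  then show ?thesis using assms by (simp add: I_def)
qed

(* Second family: for 2 \<le> a \<le> r the hyperplanes x(A a) = a - 1 split P(U_{n,r}), and the
  lower halves have strictly increasing numbers of bases.  This gives r - 1 splits. *)
lemma split_family_dense:
  fixes A :: "nat \<Rightarrow> 'n::finite set"
  assumes chain: "\<And>a. a \<le> CARD('n) \<Longrightarrow> card (A a) = a"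
    and mono: "\<And>a b. a \<le> b \<Longrightarrow> A a \<subseteq> A b" and "2 \<le> r" "r + 2 \<le> CARD('n)"
  shows "r - 1 \<le> num_splits (uniform_matroid r :: 'n set set)"
proof -
  define I where "I = {2..r}"
  have split: "hyperplane_split (uniform_matroid r :: 'n set set)
      (level_bases r (A a) 0 (a - 1)) (level_bases r (A a) (a - 1) r)" if "a \<in> I" for a
  proof -
    have a: "2 \<le> a" "a \<le> r" and "card (A a) = a" using that chain[of a] assms by (auto simp: I_def)
    obtain Bh :: "'n set" where Bh: "A a \<subseteq> Bh" "card Bh = r"
      using exists_subset_between[of "A a" r UNIV] \<open>card (A a) = a\<close> a assms by auto
    then have "card (Bh \<inter> A a) = a" using \<open>card (A a) = a\<close> by (simp add: Int_absorb1)
    moreover have "r \<le> card (- A 2)" using chain[of 2] assms by (simp add: card_complement)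
    then obtain Bl :: "'n set" where Bl: "Bl \<subseteq> - A 2" "card Bl = r"
      using exists_subset_between[of "{}" r "- A 2"] by auto
    moreover have "card (Bl \<inter> A a) < a - 1"
    proof -
      have "card (Bl \<inter> A a) \<le> card (A a - A 2)"
        using Bl by (intro card_mono) auto
      also have "\<dots> = a - 2"
        using mono[OF a(1)] chain[of 2] \<open>card (A a) = a\<close> assms by (simp add: card_Diff_subset)
      finally show ?thesis using a by linarith
    qed
    ultimately show ?thesis using uniform_level_split[of Bh r "a - 1" "A a" Bl] Bh a by auto
  qed
  have "strict_mono_on I (\<lambda>a. card (level_bases r (A a) 0 (a - 1)))"
  proof (rule strict_mono_onI)
    fix a b assume "a \<in> I" "b \<in> I" "a < b"
    then have ab: "2 \<le> a" "a < b" "b \<le> r" by (auto simp: I_def)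
    have card_diff: "card (A b - A a) = b - a"
      using chain[of a] chain[of b] mono[of a b] ab assms by (simp add: card_Diff_subset)
    show "card (level_bases r (A a) 0 (a - 1)) < card (level_bases r (A b) 0 (b - 1))"
    proof (rule psubset_card_mono)
      have sub: "level_bases r (A a) 0 (a - 1) \<subseteq> level_bases r (A b) 0 (b - 1)"
      proof
        fix B assume B: "B \<in> level_bases r (A a) 0 (a - 1)"
        have "card (B \<inter> A b) \<le> card ((B \<inter> A a) \<union> (A b - A a))"
          by (intro card_mono) auto
        also have "\<dots> \<le> card (B \<inter> A a) + (b - a)"
          using card_Un_le[of "B \<inter> A a" "A b - A a"] card_diff by simp
        finally show "B \<in> level_bases r (A b) 0 (b - 1)"
          using B ab by (auto simp: level_bases_def)
      qed
      obtain x where x: "x \<in> A b - A a"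
        using card_diff ab by (metis all_not_in_conv card.empty zero_less_diff less_irrefl)
      have "card (A a) \<le> r" "r \<le> card (- {x})"
        using chain[of a] ab assms by (auto simp: card_complement)
      moreover have "A a \<subseteq> - {x}" using x by auto
      ultimately obtain B :: "'n set" where B: "A a \<subseteq> B" "B \<subseteq> - {x}" "card B = r"
        using exists_subset_between[of "A a" r "- {x}"] by auto
      have "card (B \<inter> A a) = a" using B chain[of a] ab assms by (simp add: Int_absorb1)
      then have "B \<notin> level_bases r (A a) 0 (a - 1)" using ab by (auto simp: level_bases_def)
      moreover have "B \<in> level_bases r (A b) 0 (b - 1)"
      proof -
        have "card (B \<inter> A b) \<le> card (A b - {x})" using B by (intro card_mono) auto
        also have "\<dots> = b - 1" using x chain[of b] ab assms by (simp add: card_Diff_singleton)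
        finally show ?thesis using B(3) by (simp add: level_bases_def)
      qed
      ultimately show "level_bases r (A a) 0 (a - 1) \<subset> level_bases r (A b) 0 (b - 1)"
        using sub by blast
    qed simp
  qed
  then have "inj_on (\<lambda>a. card (level_bases r (A a) 0 (a - 1))) I"
    by (rule strict_mono_on_imp_inj_on)
  then have "card I \<le> num_splits (uniform_matroid r :: 'n set set)"
    using split by (intro num_splits_lower_bound) (auto simp: I_def inj_on_def)
  then show ?thesis by (simp add: I_def)
qed

theorem corollary3:
  fixes r :: nat
  assumes "CARD('n::finite) \<ge> r + 2" and "r + 2 \<ge> 4"
  shows "num_splits (uniform_matroid r :: 'n set set) \<ge> CARD('n) div 2 - 1"
proof -
  obtain A :: "nat \<Rightarrow> 'n set"
    where chain: "\<And>a. a \<le> CARD('n) \<Longrightarrow> card (A a) = a" and mono: "\<And>a b. a \<le> b \<Longrightarrow> A a \<subseteq> A b"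
    using nested_chain[where 'n = 'n] by blast
  have "2 \<le> r" using assms by simp
  show ?thesis
  proof (cases "2 * r \<le> CARD('n)")
    case True
    then have "CARD('n) div 2 - 1 \<le> CARD('n) - r - 1" by linarith
    then show ?thesis using split_family_sparse[OF chain mono \<open>2 \<le> r\<close> assms(1)] by linarith
  next
    case False
    then have "CARD('n) div 2 - 1 \<le> r - 1" by linarith
    then show ?thesis using split_family_dense[OF chain mono \<open>2 \<le> r\<close> assms(1)] by linarith
  qed
qed

end
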